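(* Let $r\ge5$ and let $C$ be a graph on $r+1$ vertices that has no vertex cover of size $1$. Let $c_3$ be the number of $3$-element vertex subsets of $C$ that are vertex covers. If \[ 4r-16+\frac{36}{r+2}\le c_3<4r-8, \] then $C$ is the disjoint union of a $K_3$ with isolated vertices, or the disjoint union of a $P_4$ (path on $4$ vertices) with isolated vertices.
   Context: A vertex cover of a graph is a set of vertices meeting every edge. *)

theory Defs
  imports Complex_Main
begin

definition simple_graph :: "'a set \<Rightarrow> 'a set set \<Rightarrow> bool" where
  "simple_graph V E \<longleftrightarrow> finite V \<and> (\<forall>e\<in>E. e \<subseteq> V \<and> card e = 2)"

definition vertex_cover :: "'a set \<Rightarrow> 'a set set \<Rightarrow> 'a set \<Rightarrow> bool" where
  "vertex_cover V E S \<longleftrightarrow> S \<subseteq> V \<and> (\<forall>e\<in>E. S \<inter> e \<noteq> {})"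

definition num_covers :: "'a set \<Rightarrow> 'a set set \<Rightarrow> nat \<Rightarrow> nat" where
  "num_covers V E k = card {S. card S = k \<and> vertex_cover V E S}"

definition K3_plus_isolated :: "'a set \<Rightarrow> 'a set set \<Rightarrow> bool" where
  "K3_plus_isolated V E \<longleftrightarrow> (\<exists>a b c. a \<in> V \<and> b \<in> V \<and> c \<in> V \<and> distinct [a, b, c] \<and>
      E = {{a, b}, {b, c}, {a, c}})"

definition P4_plus_isolated :: "'a set \<Rightarrow> 'a set set \<Rightarrow> bool" where
  "P4_plus_isolated V E \<longleftrightarrow> (\<exists>a b c d. a \<in> V \<and> b \<in> V \<and> c \<in> V \<and> d \<in> V \<and> distinct [a, b, c, d] \<and>
      E = {{a, b}, {b, c}, {c, d}})"

end

theory Submission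
  imports Defs
begin

text \<open>The hypotheses give 2r \<le> c_3 < 4r - 8. Without a vertex cover of size at most 2,
  branching three times on the two ends of an uncovered edge bounds c_3 by 8 < 2r. Otherwise let
  {u, v} be a cover. A set S is then a cover iff N(u) \<subseteq> S whenever u \<notin> S and N(v) \<subseteq> S
  whenever v \<notin> S, so c_3 is a sum of four counts of 3-element supersets of a fixed set, one for
  each way S meets {u, v}. These counts depend only on |N(u) \<union> {v}|, |N(v) \<union> {u}|,
  |N(u) \<union> N(v)| and on whether uv is an edge, and the window leaves only two shapes: uv an edge
  and u, v with one further neighbour each (a triangle or a P4), or uv a non-edge, one of u, v of
  degree 1 and its neighbour adjacent to the other one, which has degree 2 (a P4).\<close>

definition supersets :: "'a set \<Rightarrow> nat \<Rightarrow> 'a set \<Rightarrow> 'a set set" where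
  "supersets W k X = {S. S \<subseteq> W \<and> card S = k \<and> X \<subseteq> S}"

lemma card_supersets:
  assumes "finite W"
  shows "card (supersets W k X) =
    (if X \<subseteq> W \<and> card X \<le> k then (card W - card X) choose (k - card X) else 0)"
proof (cases "X \<subseteq> W \<and> card X \<le> k")
  case True
  then have fX: "finite X" using assms finite_subset by blast
  have "bij_betw (\<lambda>T. T \<union> X) {T. T \<subseteq> W - X \<and> card T = k - card X} (supersets W k X)"
  proof (rule bij_betw_byWitness[where f' = "\<lambda>S. S - X"])
    show "(\<lambda>T. T \<union> X) ` {T. T \<subseteq> W - X \<and> card T = k - card X} \<subseteq> supersets W k X"
    proof (rule image_subsetI)
      fix T assume "T \<in> {T. T \<subseteq> W - X \<and> card T = k - card X}"
      then have "T \<subseteq> W - X" "card T = k - card X" by auto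
      moreover have "finite T" using \<open>T \<subseteq> W - X\<close> assms finite_subset by blast
      moreover have "card (T \<union> X) = card T + card X"
        using \<open>T \<subseteq> W - X\<close> \<open>finite T\<close> fX by (intro card_Un_disjoint) auto
      ultimately show "T \<union> X \<in> supersets W k X"
        using True by (auto simp: supersets_def)
    qed
    show "(\<lambda>S. S - X) ` supersets W k X \<subseteq> {T. T \<subseteq> W - X \<and> card T = k - card X}"
      using fX by (auto simp: supersets_def card_Diff_subset)
  qed (auto simp: supersets_def)
  then have "card (supersets W k X) = card {T. T \<subseteq> W - X \<and> card T = k - card X}"
    by (simp add: bij_betw_same_card)
  also have "\<dots> = (card W - card X) choose (k - card X)"
    using True assms by (simp add: n_subsets card_Diff_subset fX)
  finally show ?thesis using True by simp
next
  case False
  have "supersets W k X = {}"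
  proof (rule ccontr)
    assume "supersets W k X \<noteq> {}"
    then obtain S where "S \<subseteq> W" "card S = k" "X \<subseteq> S" by (auto simp: supersets_def)
    then show False
      using False assms by (meson card_mono finite_subset order.trans)
  qed
  then show ?thesis using False by (simp only: if_False card.empty)
qed

lemma finite_supersets: "finite W \<Longrightarrow> finite (supersets W k X)"
  by (rule finite_subset[of _ "Pow W"]) (auto simp: supersets_def)

lemma card_supersets_3:
  assumes "finite W" "X \<subseteq> W" "card X \<ge> 2"
  shows "card (supersets W 3 X) = (if card X = 2 then card W - 2 else if card X = 3 then 1 else 0)"
  using assms by (auto simp: card_supersets numeral_eq_Suc)

lemma card_2_obtain_other:
  assumes "card A = 2" "a \<in> A"
  obtains b where "A = {a, b}" "b \<noteq> a"
  using assms by (metis card_2_iff doubleton_eq_iff insert_iff singletonD)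

lemma vertex_cover_mono:
  "vertex_cover V E S \<Longrightarrow> S \<subseteq> T \<Longrightarrow> T \<subseteq> V \<Longrightarrow> vertex_cover V E T"
  unfolding vertex_cover_def by blast

lemma simple_graph_edgeE:
  assumes "simple_graph V E" "e \<in> E"
  obtains x y where "e = {x, y}" "x \<noteq> y" "x \<in> V" "y \<in> V"
  using assms unfolding simple_graph_def by (metis card_2_iff insert_subset)

definition covers_containing :: "'a set \<Rightarrow> 'a set set \<Rightarrow> nat \<Rightarrow> 'a set \<Rightarrow> 'a set set" where
  "covers_containing V E k T = {S. card S = k \<and> vertex_cover V E S \<and> T \<subseteq> S}"

lemma finite_covers_containing:
  "simple_graph V E \<Longrightarrow> finite (covers_containing V E k T)"
  by (rule finite_subset[of _ "Pow V"])
    (auto simp: covers_containing_def vertex_cover_def simple_graph_def)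

lemma card_covers_containing_le_1:
  assumes G: "simple_graph V E" and "card T = k"
  shows "card (covers_containing V E k T) \<le> 1"
proof -
  have "S = T" if "S \<in> covers_containing V E k T" for S
  proof -
    have "finite S" "card T = card S" "T \<subseteq> S"
      using G that assms(2) unfolding covers_containing_def simple_graph_def vertex_cover_def
      by (auto intro: rev_finite_subset)
    then show ?thesis by (metis card_subset_eq)
  qed
  then have "covers_containing V E k T \<subseteq> {T}" by blast
  then show ?thesis using card_mono[of "{T}"] by simp
qed

lemma card_covers_containing_branch:
  assumes G: "simple_graph V E" and e: "e \<in> E" "T \<inter> e = {}"
  shows "card (covers_containing V E k T) \<le> (\<Sum>x\<in>e. card (covers_containing V E k (insert x T)))"
proof -
  have "covers_containing V E k T \<subseteq> (\<Union>x\<in>e. covers_containing V E k (insert x T))"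
  proof
    fix S assume S: "S \<in> covers_containing V E k T"
    then obtain x where "x \<in> S \<inter> e"
      using e(1) unfolding covers_containing_def vertex_cover_def by blast
    with S show "S \<in> (\<Union>x\<in>e. covers_containing V E k (insert x T))"
      unfolding covers_containing_def by blast
  qed
  then have "card (covers_containing V E k T) \<le> card (\<Union>x\<in>e. covers_containing V E k (insert x T))"
    using G e(1) by (intro card_mono) (auto elim: simple_graph_edgeE intro: finite_covers_containing)
  also have "\<dots> \<le> (\<Sum>x\<in>e. card (covers_containing V E k (insert x T)))"
    using G e(1) by (intro card_UN_le) (auto elim: simple_graph_edgeE)
  finally show ?thesis .
qed

lemma card_covers_containing_le:
  assumes G: "simple_graph V E" and small: "\<forall>S. card S < k \<longrightarrow> \<not> vertex_cover V E S"
    and "card T \<le> k"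
  shows "card (covers_containing V E k T) \<le> 2 ^ (k - card T)"
  using \<open>card T \<le> k\<close>
proof (induction "k - card T" arbitrary: T)
  case 0
  then show ?case using card_covers_containing_le_1[OF G] by simp
next
  case (Suc n)
  show ?case
  proof (cases "T \<subseteq> V")
    case False
    then have "covers_containing V E k T = {}"
      unfolding covers_containing_def vertex_cover_def by blast
    then show ?thesis by (simp only: card.empty zero_le)
  next
    case True
    then have fT: "finite T" using G by (meson finite_subset simple_graph_def)
    have "\<not> vertex_cover V E T" using small Suc.hyps(2) by simp
    then obtain e where e: "e \<in> E" "T \<inter> e = {}" using True unfolding vertex_cover_def by blast
    have "card (covers_containing V E k T) \<le> (\<Sum>x\<in>e. card (covers_containing V E k (insert x T)))"
      by (rule card_covers_containing_branch[OF G e])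
    also have "\<dots> \<le> (\<Sum>x\<in>e. 2 ^ n)"
    proof (rule sum_mono)
      fix x assume "x \<in> e"
      then have "x \<notin> T" using e(2) by blast
      then have "card (insert x T) = Suc (card T)" using fT by simp
      then have "n = k - card (insert x T)" "card (insert x T) \<le> k" using Suc.hyps(2) by linarith+
      then show "card (covers_containing V E k (insert x T)) \<le> 2 ^ n"
        using Suc.hyps(1) by presburger
    qed
    also have "\<dots> = 2 ^ Suc n"
      using G e(1) by (elim simple_graph_edgeE) auto
    finally show ?thesis using Suc.hyps(2) by simp
  qed
qed

lemma num_covers_le_pow2:
  assumes "simple_graph V E" "\<forall>S. card S < k \<longrightarrow> \<not> vertex_cover V E S"
  shows "num_covers V E k \<le> 2 ^ k"
  using card_covers_containing_le[OF assms, of "{}"]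
  by (simp add: num_covers_def covers_containing_def)

definition nbhd :: "'a set set \<Rightarrow> 'a \<Rightarrow> 'a set" where
  "nbhd E w = {x. {w, x} \<in> E}"

lemma edge_nbhdE:
  assumes "simple_graph V E" "e \<in> E" "w \<in> e"
  obtains x where "x \<in> nbhd E w" "e = {w, x}"
proof -
  obtain a b where "e = {a, b}" using assms(1,2) by (elim simple_graph_edgeE)
  then have "e = {w, a} \<or> e = {w, b}" using assms(3) by auto
  then show ?thesis using that assms(2) unfolding nbhd_def by auto
qed

lemma nbhd_subset:
  assumes "simple_graph V E"
  shows "nbhd E w \<subseteq> V - {w}"
proof
  fix x assume "x \<in> nbhd E w"
  then have "{w, x} \<in> E" by (simp add: nbhd_def)
  with assms show "x \<in> V - {w}"
    by (elim simple_graph_edgeE) (auto simp: doubleton_eq_iff)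
qed

lemma finite_nbhd: "simple_graph V E \<Longrightarrow> finite (nbhd E w)"
  using nbhd_subset by (metis finite_Diff finite_subset simple_graph_def)

lemma nbhd_subset_vertex_cover:
  assumes "vertex_cover V E S" "w \<notin> S"
  shows "nbhd E w \<subseteq> S"
proof
  fix x assume "x \<in> nbhd E w"
  then have "{w, x} \<in> E" by (simp add: nbhd_def)
  then have "S \<inter> {w, x} \<noteq> {}" using assms(1) unfolding vertex_cover_def by blast
  then show "x \<in> S" using assms(2) by blast
qed

lemma vertex_cover_iff_nbhd_subset:
  assumes G: "simple_graph V E" and cover: "\<forall>e\<in>E. u \<in> e \<or> v \<in> e"
  shows "vertex_cover V E S \<longleftrightarrow>
    S \<subseteq> V \<and> (u \<notin> S \<longrightarrow> nbhd E u \<subseteq> S) \<and> (v \<notin> S \<longrightarrow> nbhd E v \<subseteq> S)"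
proof
  assume C: "vertex_cover V E S"
  then show "S \<subseteq> V \<and> (u \<notin> S \<longrightarrow> nbhd E u \<subseteq> S) \<and> (v \<notin> S \<longrightarrow> nbhd E v \<subseteq> S)"
    using nbhd_subset_vertex_cover[OF C] unfolding vertex_cover_def by blast
next
  assume S: "S \<subseteq> V \<and> (u \<notin> S \<longrightarrow> nbhd E u \<subseteq> S) \<and> (v \<notin> S \<longrightarrow> nbhd E v \<subseteq> S)"
  have "S \<inter> e \<noteq> {}" if "e \<in> E" for e
  proof -
    obtain w where "w \<in> {u, v}" "w \<in> e" using cover \<open>e \<in> E\<close> by blast
    then obtain x where "x \<in> nbhd E w" "e = {w, x}" using G \<open>e \<in> E\<close> by (elim edge_nbhdE)
    then show ?thesis using S \<open>w \<in> {u, v}\<close> by blast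
  qed
  then show "vertex_cover V E S" using S by (simp add: vertex_cover_def)
qed

lemma edges_eq_nbhds:
  assumes G: "simple_graph V E" and cover: "\<forall>e\<in>E. u \<in> e \<or> v \<in> e"
  shows "E = (\<lambda>x. {u, x}) ` nbhd E u \<union> (\<lambda>x. {v, x}) ` nbhd E v"
proof
  show "E \<subseteq> (\<lambda>x. {u, x}) ` nbhd E u \<union> (\<lambda>x. {v, x}) ` nbhd E v"
  proof
    fix e assume "e \<in> E"
    then obtain w where "w \<in> {u, v}" "w \<in> e" using cover by blast
    then obtain x where "x \<in> nbhd E w" "e = {w, x}" using G \<open>e \<in> E\<close> by (elim edge_nbhdE)
    then show "e \<in> (\<lambda>x. {u, x}) ` nbhd E u \<union> (\<lambda>x. {v, x}) ` nbhd E v"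
      using \<open>w \<in> {u, v}\<close> by blast
  qed
qed (auto simp: nbhd_def)

lemma num_covers_eq_of_cover2:
  assumes G: "simple_graph V E" and cover: "\<forall>e\<in>E. u \<in> e \<or> v \<in> e"
  shows "num_covers V E k =
      card (supersets V k {u, v})
    + card (supersets (V - {v}) k (insert u (nbhd E v)))
    + card (supersets (V - {u}) k (insert v (nbhd E u)))
    + card (supersets (V - {u, v}) k (nbhd E u \<union> nbhd E v))"
proof -
  have fV: "finite V" using G by (simp add: simple_graph_def)
  let ?P1 = "supersets V k {u, v}"
  let ?P2 = "supersets (V - {v}) k (insert u (nbhd E v))"
  let ?P3 = "supersets (V - {u}) k (insert v (nbhd E u))"
  let ?P4 = "supersets (V - {u, v}) k (nbhd E u \<union> nbhd E v)"
  have "{S. card S = k \<and> vertex_cover V E S} = ?P1 \<union> ?P2 \<union> ?P3 \<union> ?P4"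
  proof (rule set_eqI)
    fix S
    show "S \<in> {S. card S = k \<and> vertex_cover V E S} \<longleftrightarrow> S \<in> ?P1 \<union> ?P2 \<union> ?P3 \<union> ?P4"
      unfolding vertex_cover_iff_nbhd_subset[OF G cover] supersets_def
      by (cases "u \<in> S"; cases "v \<in> S") auto
  qed
  moreover have "finite ?P1" "finite ?P2" "finite ?P3" "finite ?P4"
    using fV by (simp_all add: finite_supersets)
  moreover have "?P1 \<inter> ?P2 = {}" "(?P1 \<union> ?P2) \<inter> ?P3 = {}" "(?P1 \<union> ?P2 \<union> ?P3) \<inter> ?P4 = {}"
    unfolding supersets_def by blast+
  ultimately show ?thesis
    unfolding num_covers_def by (simp add: card_Un_disjoint)
qed

lemma two_le_card_insert_nbhd:
  assumes G: "simple_graph V E" and cover: "\<forall>e\<in>E. u \<in> e \<or> v \<in> e"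
    and "v \<in> V" and no1: "\<not> vertex_cover V E {v}"
  shows "2 \<le> card (insert v (nbhd E u))"
proof -
  have "\<not> nbhd E u \<subseteq> {v}"
    using no1 \<open>v \<in> V\<close> by (auto simp: vertex_cover_iff_nbhd_subset[OF G cover])
  then obtain w where "w \<in> nbhd E u" "w \<noteq> v" by blast
  then have "card {v, w} \<le> card (insert v (nbhd E u))"
    using finite_nbhd[OF G] by (intro card_mono) auto
  then show ?thesis using \<open>w \<noteq> v\<close> by simp
qed

lemma card_nbhds_nonadjacent:
  assumes G: "simple_graph V E" and cover: "\<forall>e\<in>E. u \<in> e \<or> v \<in> e"
    and nonadj: "{u, v} \<notin> E" and no1: "\<And>w. \<not> vertex_cover V E {w}"
    and a: "2 \<le> card (insert v (nbhd E u))"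
  shows "2 \<le> card (nbhd E u \<union> nbhd E v)"
    and "card (insert v (nbhd E u)) \<le> card (nbhd E u \<union> nbhd E v) + 1"
    and "card (insert u (nbhd E v)) \<le> card (nbhd E u \<union> nbhd E v) + 1"
    and "card (nbhd E u \<union> nbhd E v) + 2 \<le> card (insert v (nbhd E u)) + card (insert u (nbhd E v))"
proof -
  have fin: "finite (nbhd E u)" "finite (nbhd E v)" using finite_nbhd[OF G] by blast+
  have "v \<notin> nbhd E u" "u \<notin> nbhd E v" using nonadj by (simp_all add: nbhd_def insert_commute)
  then have ins: "card (insert v (nbhd E u)) = card (nbhd E u) + 1"
    "card (insert u (nbhd E v)) = card (nbhd E v) + 1" using fin by simp_all
  show "card (insert v (nbhd E u)) \<le> card (nbhd E u \<union> nbhd E v) + 1"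
    "card (insert u (nbhd E v)) \<le> card (nbhd E u \<union> nbhd E v) + 1"
    unfolding ins using fin by (simp_all add: card_mono)
  show "card (nbhd E u \<union> nbhd E v) + 2 \<le> card (insert v (nbhd E u)) + card (insert u (nbhd E v))"
    unfolding ins using card_Un_le[of "nbhd E u" "nbhd E v"] by simp
  show "2 \<le> card (nbhd E u \<union> nbhd E v)"
  proof (rule ccontr)
    assume "\<not> 2 \<le> card (nbhd E u \<union> nbhd E v)"
    moreover have "nbhd E u \<noteq> {}" using a ins by auto
    ultimately obtain w where w: "nbhd E u \<union> nbhd E v = {w}"
      using fin by (metis One_nat_def Un_empty card_0_eq card_1_singleton_iff finite_Un less_2_cases not_le)
    have "u \<noteq> w" "v \<noteq> w" "w \<in> V"
      using w nbhd_subset[OF G, of u] nbhd_subset[OF G, of v] \<open>nbhd E u \<noteq> {}\<close> nonadj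
      by (auto simp: nbhd_def insert_commute)
    then have "vertex_cover V E {w}"
      using w by (auto simp: vertex_cover_iff_nbhd_subset[OF G cover])
    with no1 show False by blast
  qed
qed

lemma num_covers_3_of_cover2:
  assumes G: "simple_graph V E" and uv: "u \<in> V" "v \<in> V" "u \<noteq> v"
    and cover: "\<forall>e\<in>E. u \<in> e \<or> v \<in> e"
    and a: "2 \<le> card (insert v (nbhd E u))" and b: "2 \<le> card (insert u (nbhd E v))"
    and k: "{u, v} \<notin> E \<Longrightarrow> 2 \<le> card (nbhd E u \<union> nbhd E v)"
  shows "num_covers V E 3 = (card V - 2)
    + (if card (insert u (nbhd E v)) = 2 then card V - 3
       else if card (insert u (nbhd E v)) = 3 then 1 else 0)
    + (if card (insert v (nbhd E u)) = 2 then card V - 3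
       else if card (insert v (nbhd E u)) = 3 then 1 else 0)
    + (if {u, v} \<in> E then 0
       else if card (nbhd E u \<union> nbhd E v) = 2 then card V - 4
       else if card (nbhd E u \<union> nbhd E v) = 3 then 1 else 0)"
proof -
  have fV: "finite V" using G by (simp add: simple_graph_def)
  have Nu: "nbhd E u \<subseteq> V - {u}" and Nv: "nbhd E v \<subseteq> V - {v}"
    using nbhd_subset[OF G] by blast+
  have "card (supersets (V - {u, v}) 3 (nbhd E u \<union> nbhd E v)) =
      (if {u, v} \<in> E then 0
       else if card (nbhd E u \<union> nbhd E v) = 2 then card V - 4
       else if card (nbhd E u \<union> nbhd E v) = 3 then 1 else 0)"
  proof (cases "{u, v} \<in> E")
    case True
    then have "v \<in> nbhd E u" by (simp add: nbhd_def)
    then show ?thesis using True fV by (auto simp: card_supersets)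
  next
    case False
    then have "nbhd E u \<union> nbhd E v \<subseteq> V - {u, v}"
      using Nu Nv by (auto simp: nbhd_def insert_commute)
    then show ?thesis
      using card_supersets_3[OF fV[THEN finite_Diff]] False k fV uv by (auto simp: card_Diff_subset)
  qed
  moreover have "card (supersets V 3 {u, v}) = card V - 2"
    using card_supersets_3[OF fV, of "{u, v}"] uv by simp
  moreover have "card (supersets (V - {v}) 3 (insert u (nbhd E v))) =
      (if card (insert u (nbhd E v)) = 2 then card V - 3
       else if card (insert u (nbhd E v)) = 3 then 1 else 0)"
    using card_supersets_3[of "V - {v}" "insert u (nbhd E v)"] fV uv Nv b by auto
  moreover have "card (supersets (V - {u}) 3 (insert v (nbhd E u))) =
      (if card (insert v (nbhd E u)) = 2 then card V - 3
       else if card (insert v (nbhd E u)) = 3 then 1 else 0)"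
    using card_supersets_3[of "V - {u}" "insert v (nbhd E u)"] fV uv Nu a by auto
  ultimately show ?thesis by (simp add: num_covers_eq_of_cover2[OF G cover])
qed

lemma K3_or_P4_of_cover2_adjacent:
  assumes G: "simple_graph V E" and cover: "\<forall>e\<in>E. u \<in> e \<or> v \<in> e"
    and "{u, v} \<in> E" "card (insert v (nbhd E u)) = 2" "card (insert u (nbhd E v)) = 2"
  shows "K3_plus_isolated V E \<or> P4_plus_isolated V E"
proof -
  have "v \<in> nbhd E u" "u \<in> nbhd E v"
    using \<open>{u, v} \<in> E\<close> by (simp_all add: nbhd_def insert_commute)
  moreover from this have "card (nbhd E u) = 2" "card (nbhd E v) = 2"
    using assms(4,5) by (simp_all add: insert_absorb)
  ultimately obtain x y where x: "nbhd E u = {v, x}" "x \<noteq> v" and y: "nbhd E v = {u, y}" "y \<noteq> u"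
    by (metis card_2_obtain_other)
  have V: "u \<in> V" "v \<in> V" "x \<in> V" "y \<in> V" "x \<noteq> u" "y \<noteq> v" "u \<noteq> v"
    using nbhd_subset[OF G, of u] nbhd_subset[OF G, of v] x y by auto
  have E: "E = {{u, v}, {u, x}, {v, y}}"
    using edges_eq_nbhds[OF G cover] x(1) y(1) by (auto simp: insert_commute)
  show ?thesis
  proof (cases "x = y")
    case True
    then have "E = {{u, v}, {v, x}, {u, x}}" using E by auto
    then have "K3_plus_isolated V E"
      unfolding K3_plus_isolated_def using V x(2) by (intro exI[of _ u] exI[of _ v] exI[of _ x]) auto
    then show ?thesis ..
  next
    case False
    have "E = {{x, u}, {u, v}, {v, y}}" using E by (auto simp: insert_commute)
    then have "P4_plus_isolated V E"
      unfolding P4_plus_isolated_def using V x(2) y(2) False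
      by (intro exI[of _ x] exI[of _ u] exI[of _ v] exI[of _ y]) auto
    then show ?thesis ..
  qed
qed

lemma P4_of_cover2_nonadjacent:
  assumes G: "simple_graph V E" and cover: "\<forall>e\<in>E. u \<in> e \<or> v \<in> e"
    and "u \<in> V" "v \<in> V" "{u, v} \<notin> E"
    and "card (insert v (nbhd E u)) = 2" "card (insert u (nbhd E v)) = 3"
    and "card (nbhd E u \<union> nbhd E v) = 2"
  shows "P4_plus_isolated V E"
proof -
  have fin: "finite (nbhd E u)" "finite (nbhd E v)" using finite_nbhd[OF G] by blast+
  have "v \<notin> nbhd E u" "u \<notin> nbhd E v" using \<open>{u, v} \<notin> E\<close> by (simp_all add: nbhd_def insert_commute)
  then have Nu: "card (nbhd E u) = 1" and Nv: "card (nbhd E v) = 2" using assms(6,7) fin by simp_all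
  then obtain x where x: "nbhd E u = {x}" by (auto simp: card_1_singleton_iff)
  have "nbhd E v = nbhd E u \<union> nbhd E v" using Nv assms(8) fin by (intro card_subset_eq) auto
  then have "x \<in> nbhd E v" using x by blast
  with Nv obtain y where y: "nbhd E v = {x, y}" "y \<noteq> x" by (rule card_2_obtain_other)
  have "x \<noteq> v" using x \<open>v \<notin> nbhd E u\<close> by auto
  moreover have "x \<in> V" "y \<in> V" "x \<noteq> u" "y \<noteq> v" "u \<noteq> v"
    using nbhd_subset[OF G, of u] nbhd_subset[OF G, of v] x y Nu Nv by auto
  moreover have "y \<noteq> u" using y \<open>u \<notin> nbhd E v\<close> by blast
  ultimately have "distinct [u, x, v, y]" "x \<in> V" "y \<in> V"
    using y(2) by auto
  moreover have "E = {{u, x}, {x, v}, {v, y}}"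
    using edges_eq_nbhds[OF G cover] x y(1) by (auto simp: insert_commute)
  ultimately show ?thesis
    unfolding P4_plus_isolated_def using assms(3,4) by blast
qed

text \<open>The four summands count the 3-covers containing both, only u, only v, and neither of the
  vertices u, v of a 2-cover, with a = |N(u) \<union> {v}|, b = |N(v) \<union> {u}|, k = |N(u) \<union> N(v)|.\<close>
lemma cover_count_cases:
  fixes n c a b k :: nat
  assumes "6 \<le> n" "2 * n \<le> c + 2" "c + 12 < 4 * n"
    and "c = (n - 2)
      + (if b = 2 then n - 3 else if b = 3 then 1 else 0)
      + (if a = 2 then n - 3 else if a = 3 then 1 else 0)
      + (if adj then 0 else if k = 2 then n - 4 else if k = 3 then 1 else 0)"
    and "2 \<le> a" "2 \<le> b"
    and "\<not> adj \<Longrightarrow> 2 \<le> k \<and> a \<le> k + 1 \<and> b \<le> k + 1 \<and> k + 2 \<le> a + b"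
  shows "adj \<and> a = 2 \<and> b = 2 \<or> \<not> adj \<and> k = 2 \<and> (a = 2 \<and> b = 3 \<or> a = 3 \<and> b = 2)"
  using assms by (auto split: if_splits)

lemma K3_or_P4_of_cover2:
  assumes G: "simple_graph V E" and uv: "u \<in> V" "v \<in> V" "u \<noteq> v"
    and cover: "\<forall>e\<in>E. u \<in> e \<or> v \<in> e" and no1: "\<And>w. \<not> vertex_cover V E {w}"
    and n: "6 \<le> card V" "2 * card V \<le> num_covers V E 3 + 2" "num_covers V E 3 + 12 < 4 * card V"
  shows "K3_plus_isolated V E \<or> P4_plus_isolated V E"
proof -
  have cover': "\<forall>e\<in>E. v \<in> e \<or> u \<in> e" using cover by blast
  define a where "a = card (insert v (nbhd E u))"
  define b where "b = card (insert u (nbhd E v))"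
  define k where "k = card (nbhd E u \<union> nbhd E v)"
  have a: "2 \<le> a" and b: "2 \<le> b"
    unfolding a_def b_def
    using two_le_card_insert_nbhd[OF G cover uv(2) no1] two_le_card_insert_nbhd[OF G cover' uv(1) no1]
    by blast+
  have nonadj: "2 \<le> k \<and> a \<le> k + 1 \<and> b \<le> k + 1 \<and> k + 2 \<le> a + b" if "{u, v} \<notin> E"
    unfolding a_def b_def k_def using card_nbhds_nonadjacent[OF G cover that no1] a a_def by blast
  have "num_covers V E 3 = (card V - 2)
      + (if b = 2 then card V - 3 else if b = 3 then 1 else 0)
      + (if a = 2 then card V - 3 else if a = 3 then 1 else 0)
      + (if {u, v} \<in> E then 0 else if k = 2 then card V - 4 else if k = 3 then 1 else 0)"
    unfolding a_def b_def k_def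
    by (rule num_covers_3_of_cover2[OF G uv cover]) (use a b nonadj in \<open>simp_all add: a_def b_def k_def\<close>)
  then have "{u, v} \<in> E \<and> a = 2 \<and> b = 2 \<or>
      {u, v} \<notin> E \<and> k = 2 \<and> (a = 2 \<and> b = 3 \<or> a = 3 \<and> b = 2)"
    by (rule cover_count_cases[OF n _ a b nonadj])
  then consider (adj) "{u, v} \<in> E" "a = 2" "b = 2"
    | (end_u) "{u, v} \<notin> E" "k = 2" "a = 2" "b = 3"
    | (end_v) "{v, u} \<notin> E" "k = 2" "a = 3" "b = 2"
    by (auto simp: insert_commute)
  then show ?thesis
  proof cases
    case adj
    then show ?thesis using K3_or_P4_of_cover2_adjacent[OF G cover] by (simp add: a_def b_def)
  next
    case end_u
    then show ?thesis using P4_of_cover2_nonadjacent[OF G cover uv(1,2)] by (simp add: a_def b_def k_def)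
  next
    case end_v
    then show ?thesis using P4_of_cover2_nonadjacent[OF G cover' uv(2,1)]
      by (simp add: a_def b_def k_def Un_commute)
  qed
qed

lemma two_mul_sub_one_less_lower_bound:
  fixes r :: real
  assumes "5 \<le> r"
  shows "2 * r - 1 < 4 * r - 16 + 36 / (r + 2)"
proof -
  have "(15 - 2 * r) * (r + 2) < 36"
    using mult_nonneg_nonneg[of "r - 5" "2 * r - 1"] assms by (simp add: algebra_simps)
  then show ?thesis using assms by (simp add: field_simps)
qed

theorem mainTheorem12:
  fixes V :: "'a set" and E :: "'a set set" and r :: nat
  assumes "r \<ge> 5"
    and "simple_graph V E"
    and "card V = r + 1"
    and "\<not> (\<exists>S. card S = 1 \<and> vertex_cover V E S)"
    and "4 * real r - 16 + 36 / (real r + 2) \<le> real (num_covers V E 3)"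
    and "real (num_covers V E 3) < 4 * real r - 8"
  shows "K3_plus_isolated V E \<or> P4_plus_isolated V E"
proof -
  note G = assms(2)
  have no1: "\<And>w. \<not> vertex_cover V E {w}" using assms(4) by force
  have lo: "2 * r \<le> num_covers V E 3"
    using assms(5) two_mul_sub_one_less_lower_bound[of "real r"] assms(1) by linarith
  have hi: "num_covers V E 3 + 8 < 4 * r" using assms(6) by linarith
  show ?thesis
  proof (cases "\<exists>S. card S = 2 \<and> vertex_cover V E S")
    case True
    then obtain u v where "u \<noteq> v" "vertex_cover V E {u, v}" by (metis card_2_iff)
    then have "u \<in> V" "v \<in> V" "\<forall>e\<in>E. u \<in> e \<or> v \<in> e" unfolding vertex_cover_def by blast+
    then show ?thesis
      using K3_or_P4_of_cover2[OF G _ _ \<open>u \<noteq> v\<close> _ no1] assms(1,3) lo hi by simp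
  next
    case False
    have "\<not> vertex_cover V E S" if small: "card S < 3" for S
    proof
      assume S: "vertex_cover V E S"
      obtain w where "w \<in> V" using assms(1,3) by fastforce
      moreover have "finite S" using S G unfolding vertex_cover_def simple_graph_def
        by (meson finite_subset)
      ultimately have "card S \<noteq> 0"
        using S no1 vertex_cover_mono[OF S, of "{w}"] by auto
      then consider "card S = 1" | "card S = 2" using small by linarith
      then show False
        using S False no1 by cases (auto simp: card_1_singleton_iff)
    qed
    then have "num_covers V E 3 \<le> 2 ^ 3" using num_covers_le_pow2[OF G] by blast
    then show ?thesis using lo assms(1) by simp
  qed
qed

end
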